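(* Let $X=(V,E,T)$ be a $2$-dimensional $(k_0,k_1)$-regular $(\epsilon,\mu)$-cosystolic expander, let $\frac12<\eta<1$, and let $F\subseteq E$. Suppose $\widetilde\lambda_2(G_0(X))<\frac12$ and $|V|$ is sufficiently large, i.e. $|V|\ge N$ for a threshold $N$ depending only on $\mu$ and $\widetilde\lambda_2(G_0(X))$. Then: (1) for every vertex $v\in V$ with $\frac{k_0}{2}<|F_v|\le\eta k_0$ (a semi-fat vertex), $|\delta(F_v)|\ge\epsilon k_1(1-\eta)k_0$; (2) for every vertex $v\in V$ with $|F_v|\le\frac{k_0}{2}$ (a non-fat vertex), $|\delta(F_v)|\ge\epsilon k_1|F_v|$.
   Context: A $2$-dimensional simplicial complex $X=(V,E,T)$ consists of a finite vertex set $V$, a set $E$ of $2$-element subsets of $V$ and a set $T$ of $3$-element subsets of $V$ such that every $2$-element subset of a triangle lies in $E$. $X$ is $(k_0,k_1)$-regular if every vertex lies in exactly $k_0$ edges and every edge lies in exactly $k_1$ triangles. $G_0(X)=(V,E)$ is the underlying graph and $\widetilde\lambda_2(G_0(X))$ its second largest adjacency eigenvalue divided by $k_0$. For $S\subseteq V$, $\delta(S)$ is the set of edges with exactly one endpoint in $S$; for $F\subseteq E$, $\delta(F)$ is the set of triangles containing an odd number of edges of $F$. $B^0(X)=\{\emptyset,V\}$, $Z^0(X)=\{S\subseteq V:\delta(S)=\emptyset\}$, $B^1(X)=\{\delta(S):S\subseteq V\}$, $Z^1(X)=\{F\subseteq E:\delta(F)=\emptyset\}$. $\mathrm{dist}(A,B)=|A\setminus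 B|+|B\setminus A|$; distance to a family is the minimum over its members. With $X(0)=V$, $X(1)=E$, $X$ is an $(\epsilon,\mu)$-cosystolic expander ($\epsilon,\mu>0$) if for $i\in\{0,1\}$ and all $S\subseteq X(i)$: if $|\delta(S)|=0$ then $S\in B^i(X)$ or $|S|\ge\mu|X(i)|$; otherwise $|\delta(S)|/\mathrm{dist}(S,Z^i(X))\ge\epsilon k_i$. The local view of $v$ with respect to $F$ is $F_v=\{e\in F: v\in e\}$. *)

theory Defs
  imports "HOL-Analysis.Analysis" "Jordan_Normal_Form.Char_Poly"
begin

definition complex2 :: "'a set \<Rightarrow> 'a set set \<Rightarrow> 'a set set \<Rightarrow> bool" where
  "complex2 V E T \<longleftrightarrow> finite V \<and>
     (\<forall>e\<in>E. e \<subseteq> V \<and> card e = 2) \<and>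
     (\<forall>t\<in>T. t \<subseteq> V \<and> card t = 3 \<and> (\<forall>e. e \<subseteq> t \<and> card e = 2 \<longrightarrow> e \<in> E))"

definition regular2 :: "'a set \<Rightarrow> 'a set set \<Rightarrow> 'a set set \<Rightarrow> nat \<Rightarrow> nat \<Rightarrow> bool" where
  "regular2 V E T k0 k1 \<longleftrightarrow>
     (\<forall>v\<in>V. card {e\<in>E. v \<in> e} = k0) \<and> (\<forall>e\<in>E. card {t\<in>T. e \<subseteq> t} = k1)"

text \<open>Coboundary maps (over F_2, sets as chains).\<close>
definition delta0 :: "'a set set \<Rightarrow> 'a set \<Rightarrow> 'a set set" where
  "delta0 E S = {e\<in>E. card (e \<inter> S) = 1}"

definition delta1 :: "'a set set \<Rightarrow> 'a set set \<Rightarrow> 'a set set" where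
  "delta1 T F = {t\<in>T. odd (card {e\<in>F. e \<subseteq> t})}"

definition B0 :: "'a set \<Rightarrow> 'a set set" where "B0 V = {{}, V}"
definition Z0 :: "'a set \<Rightarrow> 'a set set \<Rightarrow> 'a set set" where
  "Z0 V E = {S. S \<subseteq> V \<and> delta0 E S = {}}"
definition B1 :: "'a set \<Rightarrow> 'a set set \<Rightarrow> 'a set set set" where
  "B1 V E = delta0 E ` Pow V"
definition Z1 :: "'a set set \<Rightarrow> 'a set set \<Rightarrow> 'a set set set" where
  "Z1 E T = {F. F \<subseteq> E \<and> delta1 T F = {}}"

definition sdist :: "'b set \<Rightarrow> 'b set \<Rightarrow> nat" where
  "sdist A B = card (A - B) + card (B - A)"

definition sdist_fam :: "'b set \<Rightarrow> 'b set set \<Rightarrow> nat" where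
  "sdist_fam A Z = Min ((\<lambda>B. sdist A B) ` Z)"

definition cosystolic_expander ::
  "'a set \<Rightarrow> 'a set set \<Rightarrow> 'a set set \<Rightarrow> nat \<Rightarrow> nat \<Rightarrow> real \<Rightarrow> real \<Rightarrow> bool" where
  "cosystolic_expander V E T k0 k1 eps mu \<longleftrightarrow> eps > 0 \<and> mu > 0 \<and>
     (\<forall>S. S \<subseteq> V \<longrightarrow>
        (delta0 E S = {} \<longrightarrow> S \<in> B0 V \<or> real (card S) \<ge> mu * real (card V)) \<and>
        (delta0 E S \<noteq> {} \<longrightarrow>
           real (card (delta0 E S)) / real (sdist_fam S (Z0 V E)) \<ge> eps * real k0)) \<and>
     (\<forall>S. S \<subseteq> E \<longrightarrow>
        (delta1 T S = {} \<longrightarrow> S \<in> B1 V E \<or> real (card S) \<ge> mu * real (card E)) \<and>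
        (delta1 T S \<noteq> {} \<longrightarrow>
           real (card (delta1 T S)) / real (sdist_fam S (Z1 E T)) \<ge> eps * real k1))"

definition local_view :: "'a set set \<Rightarrow> 'a \<Rightarrow> 'a set set" where
  "local_view F v = {e\<in>F. v \<in> e}"

text \<open>Adjacency matrix of the graph (V,E) w.r.t. an (arbitrary) enumeration of V;
  the characteristic polynomial does not depend on the enumeration.\<close>
definition vertex_enum :: "'a set \<Rightarrow> 'a list" where
  "vertex_enum V = (SOME xs. set xs = V \<and> distinct xs)"

definition adj_matrix :: "'a set \<Rightarrow> 'a set set \<Rightarrow> real mat" where
  "adj_matrix V E = (let xs = vertex_enum V in
     mat (length xs) (length xs) (\<lambda>(i,j). if {xs ! i, xs ! j} \<in> E then 1 else 0))"

text \<open>Second largest eigenvalue, counted with (algebraic) multiplicity: the largest root x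
  of the characteristic polynomial such that the roots \<ge> x have total multiplicity \<ge> 2.\<close>
definition second_eigenvalue :: "real mat \<Rightarrow> real" where
  "second_eigenvalue A = Max {x. poly (char_poly A) x = 0 \<and>
      (\<Sum>y\<in>{y. poly (char_poly A) y = 0 \<and> x \<le> y}. order y (char_poly A)) \<ge> 2}"

definition lambda2_norm :: "'a set \<Rightarrow> 'a set set \<Rightarrow> nat \<Rightarrow> real" where
  "lambda2_norm V E k0 = second_eigenvalue (adj_matrix V E) / real k0"

end

theory Submission
  imports Defs
begin

text \<open>Every nonzero 1-cocycle \<open>Z\<close> has at least \<open>k\<^sub>0\<close> edges. Either \<open>Z\<close> is large by
  cosystolic expansion, and \<open>\<mu>|E| = \<mu>|V|k\<^sub>0/2 \<ge> 2k\<^sub>0\<close> once \<open>|V| \<ge> 4/\<mu>\<close>; or \<open>Z = \<delta>(S)\<close> is a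
  coboundary. Cuts of one or two vertices (or of their complements) have at least \<open>k\<^sub>0\<close> edges by
  regularity, and a cut with \<open>3 \<le> |S| \<le> |V| - 3\<close> and fewer than \<open>k\<^sub>0\<close> edges would make the centred
  indicator of \<open>S\<close> a test vector, orthogonal to the constant eigenvector, of Rayleigh quotient at
  least \<open>k\<^sub>0/2\<close>, contradicting \<open>\<lambda>\<^sub>2 < k\<^sub>0/2\<close>. Hence a local view \<open>F\<^sub>v\<close> with \<open>f\<close> edges lies at
  distance at least \<open>min f (k\<^sub>0 - f)\<close> from \<open>Z\<^sup>1\<close>, and cosystolic expansion gives
  \<open>|\<delta>(F\<^sub>v)| \<ge> \<epsilon>k\<^sub>1 min f (k\<^sub>0 - f)\<close>, which is each of the two claimed bounds.\<close>

text \<open>Vectors and square matrices of dimension \<open>n\<close> are functions on \<open>nat\<close> of which only the entries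
  below \<open>n\<close> matter.\<close>
definition matvec :: "nat \<Rightarrow> (nat \<Rightarrow> nat \<Rightarrow> real) \<Rightarrow> (nat \<Rightarrow> real) \<Rightarrow> nat \<Rightarrow> real" where
  "matvec n a z i = (\<Sum>j<n. a i j * z j)"

definition dotp :: "nat \<Rightarrow> (nat \<Rightarrow> real) \<Rightarrow> (nat \<Rightarrow> real) \<Rightarrow> real" where
  "dotp n z w = (\<Sum>i<n. z i * w i)"

definition qform :: "nat \<Rightarrow> (nat \<Rightarrow> nat \<Rightarrow> real) \<Rightarrow> (nat \<Rightarrow> real) \<Rightarrow> real" where
  "qform n a z = dotp n z (matvec n a z)"

lemma dotp_commute: "dotp n z w = dotp n w z"
  unfolding dotp_def by (simp add: mult.commute)

lemma dotp_self_nonneg: "dotp n z z \<ge> 0"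
  unfolding dotp_def by (intro sum_nonneg) simp

lemma dotp_self_eq_0D: "dotp n z z = 0 \<Longrightarrow> i < n \<Longrightarrow> z i = 0"
  unfolding dotp_def by (subst (asm) sum_nonneg_eq_0_iff) auto

lemma dotp_self_eq_0_imp_dotp_eq_0:
  assumes "dotp n z z = 0" shows "dotp n z w = 0"
  unfolding dotp_def by (intro sum.neutral) (simp add: dotp_self_eq_0D[OF assms])

lemma dotp_self_pos_imp_nonzero:
  assumes "dotp n z z > 0" shows "\<exists>i<n. z i \<noteq> 0"
proof (rule ccontr)
  assume "\<not> (\<exists>i<n. z i \<noteq> 0)"
  hence "dotp n z z = 0" unfolding dotp_def by simp
  thus False using assms by simp
qed

lemma dotp_lincomb_left:
  "dotp n (\<lambda>i. c * z i + d * w i) y = c * dotp n z y + d * dotp n w y"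
  unfolding dotp_def by (simp add: sum.distrib sum_distrib_left algebra_simps)

lemma dotp_lincomb_right:
  "dotp n y (\<lambda>i. c * z i + d * w i) = c * dotp n y z + d * dotp n y w"
  unfolding dotp_def by (simp add: sum.distrib sum_distrib_left algebra_simps)

lemma matvec_lincomb:
  "matvec n a (\<lambda>i. c * z i + d * w i) j = c * matvec n a z j + d * matvec n a w j"
  unfolding matvec_def by (simp add: sum.distrib sum_distrib_left algebra_simps)

lemma dotp_matvec_symmetric:
  assumes "\<And>i j. a i j = a j i"
  shows "dotp n z (matvec n a w) = dotp n w (matvec n a z)"
proof -
  have "dotp n z (matvec n a w) = (\<Sum>i<n. \<Sum>j<n. z i * a i j * w j)"
    unfolding dotp_def matvec_def by (simp add: sum_distrib_left mult.assoc)
  also have "\<dots> = (\<Sum>j<n. \<Sum>i<n. z i * a i j * w j)" by (rule sum.swap)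
  also have "\<dots> = dotp n w (matvec n a z)"
    unfolding dotp_def matvec_def
    by (simp add: sum_distrib_left assms mult.commute mult.left_commute)
  finally show ?thesis .
qed

definition unit_scale :: "nat \<Rightarrow> (nat \<Rightarrow> real) \<Rightarrow> nat \<Rightarrow> real" where
  "unit_scale n y = (\<lambda>i. if i < n then y i / sqrt (dotp n y y) else 0)"

lemma unit_scale_beyond: "n \<le> i \<Longrightarrow> unit_scale n y i = 0"
  unfolding unit_scale_def by simp

lemma dotp_unit_scale_eq_0: "dotp n y u = 0 \<Longrightarrow> dotp n (unit_scale n y) u = 0"
  unfolding dotp_def unit_scale_def by (simp add: sum_divide_distrib[symmetric])

lemma dotp_unit_scale_self:
  assumes "dotp n y y > 0" shows "dotp n (unit_scale n y) (unit_scale n y) = 1"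
proof -
  have "dotp n (unit_scale n y) (unit_scale n y) = dotp n y y / (sqrt (dotp n y y))\<^sup>2"
    unfolding dotp_def unit_scale_def by (simp add: sum_divide_distrib power2_eq_square)
  thus ?thesis using assms by simp
qed

lemma qform_unit_scale: "qform n a (unit_scale n y) = qform n a y / dotp n y y"
proof -
  have "\<And>i. i < n \<Longrightarrow> matvec n a (unit_scale n y) i = matvec n a y i / sqrt (dotp n y y)"
    unfolding matvec_def unit_scale_def by (simp add: sum_divide_distrib)
  hence "qform n a (unit_scale n y) = (\<Sum>i<n. y i * matvec n a y i) / (sqrt (dotp n y y))\<^sup>2"
    unfolding qform_def dotp_def unit_scale_def by (simp add: sum_divide_distrib power2_eq_square)
  thus ?thesis unfolding qform_def dotp_def by (simp add: sum_nonneg)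
qed

lemma continuous_on_coordinate: "continuous_on S (\<lambda>z::nat \<Rightarrow> real. z i)"
  by (rule continuous_on_subset[OF continuous_on_product_coordinates]) auto

lemma compact_unit_sphere_orthogonal:
  "compact {z. (\<forall>i. n \<le> i \<longrightarrow> z i = 0) \<and> dotp n z u = 0 \<and> dotp n z z = 1}" (is "compact ?K")
proof -
  have "compactin (product_topology (\<lambda>_. euclidean) UNIV)
          (PiE UNIV (\<lambda>i::nat. if i < n then {-1..1::real} else {0}))"
    by (subst compactin_PiE) auto
  hence cube: "compact (Pi UNIV (\<lambda>i::nat. if i < n then {-1..1::real} else {0}))"
    by (simp add: euclidean_product_topology PiE_UNIV_domain)
  have sub: "?K \<subseteq> Pi UNIV (\<lambda>i::nat. if i < n then {-1..1::real} else {0})"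
  proof (intro subsetI Pi_I)
    fix z i assume z: "z \<in> ?K"
    show "z i \<in> (if i < n then {-1..1} else {0})"
    proof (cases "i < n")
      case True
      have "(z i)\<^sup>2 \<le> dotp n z z" unfolding dotp_def power2_eq_square
        by (rule member_le_sum[where f="\<lambda>i. z i * z i"]) (use True in auto)
      hence "\<bar>z i\<bar> \<le> 1" using z by (simp add: abs_square_le_1)
      thus ?thesis using True by auto
    next
      case False thus ?thesis using z by simp
    qed
  qed
  have cl: "closed ?K"
  proof -
    have "?K = (\<Inter>i\<in>{n..}. {z. z i = 0}) \<inter> {z. dotp n z u = 0} \<inter> {z. dotp n z z = 1}"
      by auto
    moreover have "continuous_on UNIV (\<lambda>z. dotp n z u)" "continuous_on UNIV (\<lambda>z. dotp n z z)"
      unfolding dotp_def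
      by (intro continuous_on_sum continuous_on_mult continuous_on_coordinate continuous_on_const)+
    moreover have "closed {z::nat\<Rightarrow>real. z i = 0}" for i
      by (rule closed_Collect_eq[OF continuous_on_coordinate continuous_on_const])
    ultimately show ?thesis by (simp add: closed_INT closed_Int closed_Collect_eq)
  qed
  have "Pi UNIV (\<lambda>i::nat. if i < n then {-1..1::real} else {0}) \<inter> ?K = ?K" using sub by blast
  thus ?thesis using compact_Int_closed[OF cube cl] by simp
qed

lemma rayleigh_maximum_exists:
  assumes x: "dotp n x u = 0" "dotp n x x > 0"
  obtains z where "dotp n z u = 0" "dotp n z z = 1"
    "\<And>y. dotp n y u = 0 \<Longrightarrow> qform n a y \<le> qform n a z * dotp n y y"
proof -
  define K where "K = {z. (\<forall>i. n \<le> i \<longrightarrow> z i = 0) \<and> dotp n z u = 0 \<and> dotp n z z = 1}"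
  have Kne: "K \<noteq> {}"
    using dotp_unit_scale_self[OF x(2)] dotp_unit_scale_eq_0[OF x(1)] unit_scale_beyond
    unfolding K_def by blast
  have cont: "continuous_on K (qform n a)"
    unfolding qform_def dotp_def matvec_def
    by (intro continuous_on_sum continuous_on_mult continuous_on_coordinate continuous_on_const)
  obtain z where z: "z \<in> K" and zmax: "\<And>y. y \<in> K \<Longrightarrow> qform n a y \<le> qform n a z"
    using continuous_attains_sup[OF compact_unit_sphere_orthogonal[of n u, folded K_def] Kne cont]
    by blast
  have "qform n a y \<le> qform n a z * dotp n y y" if yu: "dotp n y u = 0" for y
  proof (cases "dotp n y y = 0")
    case True
    thus ?thesis using dotp_self_eq_0_imp_dotp_eq_0[OF True] unfolding qform_def by simp
  next
    case False
    hence pos: "dotp n y y > 0" using dotp_self_nonneg[of n y] by simp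
    have "unit_scale n y \<in> K"
      using dotp_unit_scale_self[OF pos] yu unfolding K_def
      by (simp add: unit_scale_beyond dotp_unit_scale_eq_0)
    hence "qform n a y / dotp n y y \<le> qform n a z"
      using zmax qform_unit_scale by metis
    thus ?thesis using pos by (simp add: divide_le_eq)
  qed
  thus thesis using that z unfolding K_def by blast
qed

lemma quadratic_nonpos_imp_linear_coeff_zero:
  fixes c d :: real
  assumes "\<And>s. 2 * s * c + s\<^sup>2 * d \<le> 0"
  shows "c = 0"
proof -
  define D where "D = \<bar>d\<bar> + 1"
  have D: "D > 0" "- d \<le> D" unfolding D_def by auto
  have "2 * (c / D) * c + (c / D)\<^sup>2 * d \<le> 0" by (rule assms)
  moreover have "- ((c / D)\<^sup>2 * d) \<le> (c / D)\<^sup>2 * D"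
    using mult_left_mono[OF D(2), of "(c / D)\<^sup>2"] by simp
  ultimately have "D * (c * c) \<le> 0"
    using D(1) by (simp add: power2_eq_square field_simps)
  hence "c * c \<le> 0" using D(1) by (simp add: mult_le_0_iff)
  thus ?thesis by (simp add: mult_le_0_iff) linarith
qed

text \<open>First-order condition for the constrained maximum: perturbing \<open>z\<close> to \<open>z + s w\<close>
  within \<open>u\<^sup>\<bottom>\<close> yields a quadratic in \<open>s\<close> that is nowhere positive.\<close>
lemma rayleigh_maximizer_stationary:
  assumes sym: "\<And>i j. a i j = a j i"
    and z: "dotp n z u = 0" "dotp n z z = 1"
    and max: "\<And>y. dotp n y u = 0 \<Longrightarrow> qform n a y \<le> qform n a z * dotp n y y"
    and w: "dotp n w u = 0"
  shows "dotp n w (matvec n a z) = qform n a z * dotp n w z"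
proof -
  define l where "l = qform n a z"
  have "2 * s * (dotp n w (matvec n a z) - l * dotp n w z) + s\<^sup>2 * (qform n a w - l * dotp n w w) \<le> 0"
    for s
  proof -
    define y where "y = (\<lambda>i. 1 * z i + s * w i)"
    have "dotp n y u = 0" unfolding y_def dotp_lincomb_left using z w by simp
    hence "qform n a y \<le> l * dotp n y y" using max unfolding l_def by simp
    moreover have "qform n a y = l + 2 * s * dotp n w (matvec n a z) + s\<^sup>2 * qform n a w"
    proof -
      have mvy: "matvec n a y = (\<lambda>i. 1 * matvec n a z i + s * matvec n a w i)"
        unfolding y_def by (rule ext) (rule matvec_lincomb)
      have "qform n a y = dotp n z (matvec n a z) + s * dotp n z (matvec n a w)
                           + s * (dotp n w (matvec n a z) + s * dotp n w (matvec n a w))"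
        unfolding qform_def mvy dotp_lincomb_right unfolding y_def dotp_lincomb_left
        by (simp add: algebra_simps)
      also have "dotp n z (matvec n a w) = dotp n w (matvec n a z)"
        by (rule dotp_matvec_symmetric[OF sym])
      finally show ?thesis unfolding qform_def l_def by (simp add: algebra_simps power2_eq_square)
    qed
    moreover have "dotp n y y = 1 + 2 * s * dotp n w z + s\<^sup>2 * dotp n w w"
      unfolding y_def dotp_lincomb_left dotp_lincomb_right using z(2)
      by (simp add: algebra_simps power2_eq_square dotp_commute[of n z w])
    ultimately show ?thesis by (simp add: algebra_simps power2_eq_square)
  qed
  thus ?thesis unfolding l_def using quadratic_nonpos_imp_linear_coeff_zero by fastforce
qed

lemma rayleigh_maximizer_eigenvector:
  assumes sym: "\<And>i j. a i j = a j i"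
    and u: "\<forall>i<n. matvec n a u i = k * u i"
    and z: "dotp n z u = 0" "dotp n z z = 1"
    and max: "\<And>y. dotp n y u = 0 \<Longrightarrow> qform n a y \<le> qform n a z * dotp n y y"
  shows "\<forall>i<n. matvec n a z i = qform n a z * z i"
proof -
  define l where "l = qform n a z"
  define r where "r i = matvec n a z i - l * z i" for i
  have "dotp n r u = dotp n u (matvec n a z) - l * dotp n z u"
    unfolding r_def dotp_def by (simp add: sum_subtractf sum_distrib_left algebra_simps)
  also have "dotp n u (matvec n a z) = dotp n z (matvec n a u)" by (rule dotp_matvec_symmetric[OF sym])
  also have "\<dots> = k * dotp n z u" unfolding dotp_def using u by (simp add: sum_distrib_left algebra_simps)
  finally have ru: "dotp n r u = 0" using z(1) by simp
  have "dotp n r r = dotp n r (matvec n a z) - l * dotp n r z"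
    unfolding dotp_def r_def by (simp add: sum_subtractf sum.distrib sum_distrib_left algebra_simps)
  also have "\<dots> = 0"
    using rayleigh_maximizer_stationary[OF sym z max ru] unfolding l_def by simp
  finally show ?thesis using dotp_self_eq_0D unfolding r_def l_def by fastforce
qed

lemma eigenvector_orthogonal_ge:
  assumes sym: "\<And>i j. a i j = a j i"
    and u: "\<forall>i<n. matvec n a u i = k * u i"
    and x: "dotp n x u = 0" "dotp n x x > 0" "qform n a x \<ge> t * dotp n x x"
  obtains z l where "dotp n z u = 0" "dotp n z z = 1" "\<forall>i<n. matvec n a z i = l * z i" "t \<le> l"
proof -
  obtain z where z: "dotp n z u = 0" "dotp n z z = 1"
    and max: "\<And>y. dotp n y u = 0 \<Longrightarrow> qform n a y \<le> qform n a z * dotp n y y"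
    using rayleigh_maximum_exists[OF x(1,2)] by blast
  have "t * dotp n x x \<le> qform n a z * dotp n x x" using x(3) max[OF x(1)] by linarith
  hence "t \<le> qform n a z" using x(2) by simp
  thus thesis using that z rayleigh_maximizer_eigenvector[OF sym u z max] by blast
qed

lemma mat_mult_vec_matvec: "mat n n (\<lambda>(i,j). a i j) *\<^sub>v vec n z = vec n (matvec n a z)"
  by (rule eq_vecI) (auto simp: scalar_prod_def matvec_def atLeast0LessThan)

lemma eigenvector_root_char_poly:
  assumes ev: "\<forall>i<n. matvec n a z i = l * z i" and pos: "dotp n z z > 0"
  shows "poly (char_poly (mat n n (\<lambda>(i,j). a i j))) l = 0"
proof -
  let ?M = "mat n n (\<lambda>(i,j). a i j)"
  obtain i where i: "i < n" "z i \<noteq> 0" using dotp_self_pos_imp_nonzero[OF pos] by blast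
  have "vec n z \<noteq> 0\<^sub>v n"
  proof
    assume "vec n z = 0\<^sub>v n"
    hence "vec n z $ i = 0\<^sub>v n $ i" by simp
    thus False using i by simp
  qed
  moreover have "?M *\<^sub>v vec n z = l \<cdot>\<^sub>v vec n z"
    unfolding mat_mult_vec_matvec by (rule eq_vecI) (use ev in auto)
  ultimately have "eigenvector ?M (vec n z) l" unfolding eigenvector_def by simp
  hence "eigenvalue ?M l" unfolding eigenvalue_def by blast
  thus ?thesis using eigenvalue_root_char_poly[of ?M n] by simp
qed

text \<open>An eigenvector vanishing at coordinate \<open>i\<close> restricts to an eigenvector of the principal
  minor obtained by deleting row and column \<open>i\<close>.\<close>
lemma principal_minor_root_char_poly:
  assumes i: "i < n" and yi: "y i = 0"
    and ev: "\<forall>m<n. matvec n a y m = k * y m" and pos: "dotp n y y > 0"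
  shows "poly (char_poly (mat_delete (mat n n (\<lambda>(i,j). a i j)) i i)) k = 0"
proof -
  define a' where "a' p q = a (insert_index i p) (insert_index i q)" for p q
  define y' where "y' p = y (insert_index i p)" for p
  have minor: "mat_delete (mat n n (\<lambda>(i,j). a i j)) i i = mat (n-1) (n-1) (\<lambda>(p,q). a' p q)"
    by (rule eq_matI) (auto simp: mat_delete_def a'_def insert_index_def)
  have "insert_index i ` {..<n-1} = {..<n} - {i}"
    using insert_index_image[of i "n-1"] i by (simp add: atLeast0LessThan)
  hence reindex: "(\<Sum>q<n-1. f (insert_index i q)) = (\<Sum>m\<in>{..<n} - {i}. f m)"
    for f :: "nat \<Rightarrow> real"
    using sum.reindex[OF insert_index_inj_on[of i "{..<n-1}"], of f] by simp
  have ev': "\<forall>p<n-1. matvec (n-1) a' y' p = k * y' p"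
  proof (intro allI impI)
    fix p assume p: "p < n - 1"
    have "matvec (n-1) a' y' p = (\<Sum>m\<in>{..<n} - {i}. a (insert_index i p) m * y m)"
      unfolding matvec_def a'_def y'_def by (rule reindex)
    also have "\<dots> = matvec n a y (insert_index i p)"
      unfolding matvec_def using i yi by (simp add: sum_diff1)
    also have "\<dots> = k * y' p" using ev p unfolding y'_def by (auto simp: insert_index_def)
    finally show "matvec (n-1) a' y' p = k * y' p" .
  qed
  have "dotp (n-1) y' y' = (\<Sum>m\<in>{..<n} - {i}. y m * y m)"
    unfolding dotp_def y'_def by (rule reindex)
  also have "\<dots> = dotp n y y" unfolding dotp_def using i yi by (simp add: sum_diff1)
  finally show ?thesis
    using eigenvector_root_char_poly[OF ev'] pos unfolding minor by simp
qed

lemma eigenvector_vanishing_at: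
  assumes u: "\<forall>m<n. matvec n a u m = k * u m" "dotp n u u > 0"
    and z: "\<forall>m<n. matvec n a z m = k * z m" "dotp n z z > 0" "dotp n z u = 0"
  obtains y where "y i = 0" "\<forall>m<n. matvec n a y m = k * y m" "dotp n y y > 0"
proof (cases "u i = 0")
  case True thus thesis using that u by blast
next
  case False
  define y where "y m = z i * u m + (- u i) * z m" for m
  have "y i = 0" unfolding y_def by simp
  moreover have "\<forall>m<n. matvec n a y m = k * y m"
    using u(1) z(1) unfolding y_def[abs_def] matvec_lincomb by (simp add: algebra_simps)
  moreover have "dotp n y y > 0"
  proof -
    have "dotp n y z = z i * dotp n u z - u i * dotp n z z"
      unfolding y_def[abs_def] dotp_lincomb_left by simp
    also have "\<dots> = - u i * dotp n z z" using z(3) dotp_commute[of n u z] by simp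
    finally have "dotp n y z \<noteq> 0" using False z(2) by simp
    hence "dotp n y y \<noteq> 0" using dotp_self_eq_0_imp_dotp_eq_0 by blast
    thus ?thesis using dotp_self_nonneg[of n y] by simp
  qed
  ultimately show thesis using that by blast
qed

text \<open>Every principal minor inherits the eigenvalue \<open>k\<close> from the two-dimensional eigenspace, and
  the derivative of the characteristic polynomial is the sum of the characteristic polynomials of
  these minors; so \<open>k\<close> is a root of both.\<close>
lemma orthogonal_eigenvectors_order_ge_2:
  assumes u: "\<forall>i<n. matvec n a u i = k * u i" "dotp n u u > 0"
    and z: "\<forall>i<n. matvec n a z i = k * z i" "dotp n z z > 0" "dotp n z u = 0"
  shows "order k (char_poly (mat n n (\<lambda>(i,j). a i j))) \<ge> 2"
proof -
  let ?M = "mat n n (\<lambda>(i,j). a i j)"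
  let ?p = "char_poly ?M"
  have car: "?M \<in> carrier_mat n n" by simp
  have n: "n > 0" using u(2) unfolding dotp_def by (cases n) auto
  have deg: "degree ?p = n" and p0: "?p \<noteq> 0"
    using degree_monic_char_poly[OF car] by auto
  have "poly (pderiv ?p) k = (\<Sum>i<n. poly (char_poly (mat_delete ?M i i)) k)"
    unfolding pderiv_char_poly[OF car] poly_sum ..
  also have "\<dots> = 0"
  proof (intro sum.neutral ballI)
    fix i assume "i \<in> {..<n}"
    hence i: "i < n" by simp
    obtain y where y: "y i = 0" "\<forall>m<n. matvec n a y m = k * y m" "dotp n y y > 0"
      using eigenvector_vanishing_at[OF u z] by blast
    show "poly (char_poly (mat_delete ?M i i)) k = 0"
      by (rule principal_minor_root_char_poly[OF i y])
  qed
  finally have "poly (pderiv ?p) k = 0" .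
  moreover have "pderiv ?p \<noteq> 0" using pderiv_eq_0_iff[of ?p] deg n by simp
  ultimately have "order k (pderiv ?p) \<noteq> 0" using order_root by blast
  thus ?thesis using order_pderiv[OF p0 eigenvector_root_char_poly[OF u]] by simp
qed

lemma le_Max_roots_of_multiplicity_2:
  fixes p :: "real poly"
  assumes p0: "p \<noteq> 0" and r: "poly p r1 = 0" "poly p r2 = 0" "t \<le> r1" "t \<le> r2"
    and two: "r1 \<noteq> r2 \<or> order r1 p \<ge> 2"
  shows "t \<le> Max {x. poly p x = 0 \<and> (\<Sum>y\<in>{y. poly p y = 0 \<and> x \<le> y}. order y p) \<ge> 2}"
proof -
  define R where "R = {y. poly p y = 0 \<and> t \<le> y}"
  have fR: "finite R" unfolding R_def using poly_roots_finite[OF p0] by simp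
  have r12: "r1 \<in> R" "r2 \<in> R" unfolding R_def using r by auto
  have "(\<Sum>y\<in>R. order y p) \<ge> 2"
  proof (cases "r1 = r2")
    case True
    thus ?thesis using two member_le_sum[OF r12(1) _ fR, of "\<lambda>y. order y p"] by simp
  next
    case False
    have "order r1 p \<ge> 1" "order r2 p \<ge> 1" using r p0 order_root by (auto simp: Suc_le_eq)
    moreover have "(\<Sum>y\<in>{r1,r2}. order y p) \<le> (\<Sum>y\<in>R. order y p)"
      by (rule sum_mono2[OF fR]) (use r12 in auto)
    ultimately show ?thesis using False by simp
  qed
  moreover have mR: "Min R \<in> R" using fR r12 by (intro Min_in) auto
  moreover have "{y. poly p y = 0 \<and> Min R \<le> y} = R"
  proof
    show "{y. poly p y = 0 \<and> Min R \<le> y} \<subseteq> R" using mR unfolding R_def by auto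
    show "R \<subseteq> {y. poly p y = 0 \<and> Min R \<le> y}" using fR by (auto simp: R_def)
  qed
  ultimately have "Min R \<in> {x. poly p x = 0 \<and> (\<Sum>y\<in>{y. poly p y = 0 \<and> x \<le> y}. order y p) \<ge> 2}"
    unfolding R_def by auto
  moreover have "finite {x. poly p x = 0 \<and> (\<Sum>y\<in>{y. poly p y = 0 \<and> x \<le> y}. order y p) \<ge> 2}"
    using poly_roots_finite[OF p0] by (rule rev_finite_subset) auto
  ultimately have "Min R \<le> Max {x. poly p x = 0 \<and> (\<Sum>y\<in>{y. poly p y = 0 \<and> x \<le> y}. order y p) \<ge> 2}"
    by (rule Max_ge[rotated])
  moreover have "t \<le> Min R" using mR unfolding R_def by simp
  ultimately show ?thesis by linarith
qed

lemma second_eigenvalue_ge: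
  assumes sym: "\<And>i j. a i j = a j i"
    and u: "\<forall>i<n. matvec n a u i = k * u i" "dotp n u u > 0" and tk: "t \<le> k"
    and x: "dotp n x u = 0" "dotp n x x > 0" "qform n a x \<ge> t * dotp n x x"
  shows "t \<le> second_eigenvalue (mat n n (\<lambda>(i,j). a i j))"
proof -
  let ?p = "char_poly (mat n n (\<lambda>(i,j). a i j))"
  have p0: "?p \<noteq> 0" using degree_monic_char_poly[of "mat n n (\<lambda>(i,j). a i j)" n] by auto
  obtain z l where z: "dotp n z u = 0" "dotp n z z = 1" "\<forall>i<n. matvec n a z i = l * z i" "t \<le> l"
    using eigenvector_orthogonal_ge[OF sym u(1) x] by blast
  have "k \<noteq> l \<or> order k ?p \<ge> 2"
    using orthogonal_eigenvectors_order_ge_2[OF u, of z] z by auto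
  thus ?thesis unfolding second_eigenvalue_def
    using le_Max_roots_of_multiplicity_2[OF p0 eigenvector_root_char_poly[OF u]
        eigenvector_root_char_poly[OF z(3)] tk z(4)] z(2) by simp
qed

lemma sum_if_one_zero_eq_card:
  "finite A \<Longrightarrow> (\<Sum>x\<in>A. if P x then 1 else 0 :: 'b::semiring_1) = of_nat (card {x\<in>A. P x})"
  by (simp add: sum.inter_filter[symmetric])

definition adj :: "'a set set \<Rightarrow> 'a \<Rightarrow> 'a \<Rightarrow> real" where
  "adj E v w = (if {v,w} \<in> E then 1 else 0)"

lemma adj_commute: "adj E v w = adj E w v"
  unfolding adj_def by (simp add: insert_commute)

lemma complex2_edgeD:
  assumes "complex2 V E T" "e \<in> E"
  shows "e \<subseteq> V" "card e = 2" "finite e"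
  using assms unfolding complex2_def by (auto intro: card_ge_0_finite)

lemma complex2_edge_obtain:
  assumes "complex2 V E T" "e \<in> E"
  obtains x y where "e = {x,y}" "x \<noteq> y"
  using complex2_edgeD(2)[OF assms] card_2_iff by metis

lemma complex2_finite:
  assumes "complex2 V E T" shows "finite V" "finite E"
proof -
  show fV: "finite V" using assms unfolding complex2_def by auto
  have "E \<subseteq> Pow V" using assms unfolding complex2_def by auto
  thus "finite E" using fV by (meson finite_Pow_iff rev_finite_subset)
qed

lemma regular2_card_neighbours:
  assumes c: "complex2 V E T" and r: "regular2 V E T k0 k1" and v: "v \<in> V"
  shows "card {w\<in>V. {v,w} \<in> E} = k0"
proof -
  have "bij_betw (\<lambda>w. {v,w}) {w\<in>V. {v,w} \<in> E} {e\<in>E. v \<in> e}"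
  proof (rule bij_betwI')
    fix x y show "({v, x} = {v, y}) = (x = y)" by (auto simp: doubleton_eq_iff)
  next
    fix x assume "x \<in> {w\<in>V. {v,w} \<in> E}" thus "{v, x} \<in> {e \<in> E. v \<in> e}" by auto
  next
    fix e assume e: "e \<in> {e \<in> E. v \<in> e}"
    then obtain x y where xy: "e = {x,y}" "x \<noteq> y"
      using complex2_edge_obtain[OF c] by blast
    have eV: "e \<subseteq> V" using e complex2_edgeD(1)[OF c] by blast
    show "\<exists>w\<in>{w \<in> V. {v, w} \<in> E}. e = {v, w}"
    proof (cases "v = x")
      case True thus ?thesis using xy e eV by (intro bexI[of _ y]) auto
    next
      case False hence "v = y" using e xy by auto
      thus ?thesis using xy e eV by (intro bexI[of _ x]) (auto simp: insert_commute)
    qed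
  qed
  hence "card {w\<in>V. {v,w} \<in> E} = card {e\<in>E. v \<in> e}" by (rule bij_betw_same_card)
  also have "\<dots> = k0" using r v unfolding regular2_def by auto
  finally show ?thesis .
qed

lemma regular2_sum_adj:
  assumes c: "complex2 V E T" and r: "regular2 V E T k0 k1" and v: "v \<in> V"
  shows "(\<Sum>w\<in>V. adj E v w) = real k0"
  unfolding adj_def using regular2_card_neighbours[OF c r v] complex2_finite(1)[OF c]
  by (simp add: sum_if_one_zero_eq_card)

lemma regular2_handshake:
  assumes c: "complex2 V E T" and r: "regular2 V E T k0 k1"
  shows "2 * card E = card V * k0"
proof -
  have fV: "finite V" and fE: "finite E" using complex2_finite[OF c] by auto
  have "card V * k0 = (\<Sum>v\<in>V. card {e\<in>E. v \<in> e})" using r unfolding regular2_def by simp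
  also have "\<dots> = (\<Sum>v\<in>V. \<Sum>e\<in>E. if v \<in> e then 1 else 0)"
    using sum_if_one_zero_eq_card[OF fE, where 'b=nat] by simp
  also have "\<dots> = (\<Sum>e\<in>E. \<Sum>v\<in>V. if v \<in> e then 1 else 0)" by (rule sum.swap)
  also have "\<dots> = (\<Sum>e\<in>E. card {v\<in>V. v \<in> e})" using sum_if_one_zero_eq_card[OF fV, where 'b=nat] by simp
  also have "\<dots> = (\<Sum>e\<in>E. 2)"
  proof (rule sum.cong[OF refl])
    fix e assume "e \<in> E"
    hence "{v\<in>V. v \<in> e} = e" "card e = 2" using complex2_edgeD[OF c] by auto
    thus "card {v\<in>V. v \<in> e} = 2" by simp
  qed
  finally show ?thesis by simp
qed

lemma regular2_adj_form:
  assumes c: "complex2 V E T" and r: "regular2 V E T k0 k1"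
  shows "(\<Sum>v\<in>V. \<Sum>w\<in>V. adj E v w * X v * X w) =
         k0 * (\<Sum>v\<in>V. (X v)\<^sup>2) - (1/2) * (\<Sum>v\<in>V. \<Sum>w\<in>V. adj E v w * (X v - X w)\<^sup>2)"
proof -
  have left: "(\<Sum>v\<in>V. \<Sum>w\<in>V. adj E v w * (X v)\<^sup>2) = k0 * (\<Sum>v\<in>V. (X v)\<^sup>2)"
  proof -
    have "(\<Sum>v\<in>V. \<Sum>w\<in>V. adj E v w * (X v)\<^sup>2) = (\<Sum>v\<in>V. (\<Sum>w\<in>V. adj E v w) * (X v)\<^sup>2)"
      by (simp add: sum_distrib_right)
    also have "\<dots> = (\<Sum>v\<in>V. (X v)\<^sup>2 * k0)"
      using regular2_sum_adj[OF c r] by (simp add: mult.commute)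
    finally show ?thesis by (simp add: sum_distrib_left mult.commute)
  qed
  have right: "(\<Sum>v\<in>V. \<Sum>w\<in>V. adj E v w * (X w)\<^sup>2) = k0 * (\<Sum>v\<in>V. (X v)\<^sup>2)"
    using left by (subst sum.swap) (simp add: adj_commute)
  have "(\<Sum>v\<in>V. \<Sum>w\<in>V. adj E v w * (X v - X w)\<^sup>2) =
        (\<Sum>v\<in>V. \<Sum>w\<in>V. adj E v w * (X v)\<^sup>2) + (\<Sum>v\<in>V. \<Sum>w\<in>V. adj E v w * (X w)\<^sup>2)
        - 2 * (\<Sum>v\<in>V. \<Sum>w\<in>V. adj E v w * X v * X w)"
    by (simp add: power2_diff algebra_simps sum.distrib sum_subtractf sum_distrib_left)
  thus ?thesis unfolding left right by (simp add: field_simps)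
qed

lemma card_delta0_eq_card_crossing_pairs:
  assumes c: "complex2 V E T"
  shows "card {(v,w). v \<in> S \<and> w \<in> V - S \<and> {v,w} \<in> E} = card (delta0 E S)"
proof -
  have "bij_betw (\<lambda>(v,w). {v,w}) {(v,w). v \<in> S \<and> w \<in> V - S \<and> {v,w} \<in> E} (delta0 E S)"
  proof (rule bij_betwI')
    fix p q assume "p \<in> {(v,w). v \<in> S \<and> w \<in> V - S \<and> {v,w} \<in> E}"
      "q \<in> {(v,w). v \<in> S \<and> w \<in> V - S \<and> {v,w} \<in> E}"
    thus "((case p of (v, w) \<Rightarrow> {v, w}) = (case q of (v, w) \<Rightarrow> {v, w})) = (p = q)"
      by (auto simp: doubleton_eq_iff)
  next
    fix p assume "p \<in> {(v,w). v \<in> S \<and> w \<in> V - S \<and> {v,w} \<in> E}"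
    then obtain v w where p: "p = (v,w)" "v \<in> S" "w \<in> V - S" "{v,w} \<in> E" by auto
    hence "{v,w} \<inter> S = {v}" by auto
    thus "(case p of (v, w) \<Rightarrow> {v, w}) \<in> delta0 E S" using p unfolding delta0_def by simp
  next
    fix e assume e: "e \<in> delta0 E S"
    hence eE: "e \<in> E" and one: "card (e \<inter> S) = 1" unfolding delta0_def by auto
    obtain x y where xy: "e = {x,y}" "x \<noteq> y" using complex2_edge_obtain[OF c eE] by blast
    have eV: "e \<subseteq> V" by (rule complex2_edgeD(1)[OF c eE])
    have "(x \<in> S) \<noteq> (y \<in> S)"
    proof
      assume "(x \<in> S) = (y \<in> S)"
      hence "e \<inter> S = {} \<or> e \<inter> S = e" using xy by auto
      thus False using one xy by auto
    qed
    thus "\<exists>p\<in>{(v,w). v \<in> S \<and> w \<in> V - S \<and> {v,w} \<in> E}. e = (case p of (v, w) \<Rightarrow> {v, w})"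
    proof (cases "x \<in> S")
      case True thus ?thesis using \<open>(x \<in> S) \<noteq> (y \<in> S)\<close> xy eV eE
        by (intro bexI[of _ "(x,y)"]) auto
    next
      case False thus ?thesis using \<open>(x \<in> S) \<noteq> (y \<in> S)\<close> xy eV eE
        by (intro bexI[of _ "(y,x)"]) (auto simp: insert_commute)
    qed
  qed
  thus ?thesis by (rule bij_betw_same_card)
qed

lemma sum_adj_indicator_diff:
  assumes c: "complex2 V E T" and S: "S \<subseteq> V"
  shows "(\<Sum>v\<in>V. \<Sum>w\<in>V. adj E v w * ((if v \<in> S then 1 else 0) - (if w \<in> S then 1 else 0))\<^sup>2)
         = 2 * real (card (delta0 E S))"
proof -
  have fV: "finite V" by (rule complex2_finite(1)[OF c])
  define P1 where "P1 = {(v,w). v \<in> S \<and> w \<in> V - S \<and> {v,w} \<in> E}"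
  define P2 where "P2 = {(v,w). v \<in> V - S \<and> w \<in> S \<and> {v,w} \<in> E}"
  have fin: "finite P1" "finite P2"
    using fV S unfolding P1_def P2_def by (auto intro: rev_finite_subset[of "V \<times> V"])
  have sub: "P1 \<union> P2 \<subseteq> V \<times> V" using S unfolding P1_def P2_def by auto
  have "(\<Sum>v\<in>V. \<Sum>w\<in>V. adj E v w * ((if v \<in> S then 1 else 0) - (if w \<in> S then 1 else 0))\<^sup>2)
      = (\<Sum>p\<in>V \<times> V. if p \<in> P1 \<union> P2 then 1 else 0)"
    unfolding sum.cartesian_product P1_def P2_def adj_def using S
    by (intro sum.cong refl) (auto split: if_splits)
  also have "\<dots> = real (card {p \<in> V \<times> V. p \<in> P1 \<union> P2})"
    using fV by (intro sum_if_one_zero_eq_card) simp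
  also have "{p \<in> V \<times> V. p \<in> P1 \<union> P2} = P1 \<union> P2" using sub by auto
  also have "card (P1 \<union> P2) = card P1 + card P2"
    by (rule card_Un_disjoint[OF fin]) (auto simp: P1_def P2_def)
  also have "card P2 = card P1"
    by (rule bij_betw_same_card[of "\<lambda>(v,w). (w,v)"], rule bij_betwI[where g="\<lambda>(v,w). (w,v)"])
      (auto simp: P1_def P2_def insert_commute)
  also have "card P1 = card (delta0 E S)"
    unfolding P1_def by (rule card_delta0_eq_card_crossing_pairs[OF c])
  finally show ?thesis by simp
qed

lemma delta0_Diff:
  assumes c: "complex2 V E T" and S: "S \<subseteq> V"
  shows "delta0 E (V - S) = delta0 E S"
proof -
  { fix e assume eE: "e \<in> E"
    have eV: "e \<subseteq> V" and ce: "card e = 2" and fe: "finite e" using complex2_edgeD[OF c eE] by auto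
    have "e \<inter> (V - S) = e - (e \<inter> S)" using eV by auto
    hence "card (e \<inter> (V - S)) = 2 - card (e \<inter> S)" using fe ce by (simp add: card_Diff_subset)
    moreover have "card (e \<inter> S) \<le> 2" using ce fe by (metis card_mono inf_le1)
    ultimately have "card (e \<inter> (V - S)) = 1 \<longleftrightarrow> card (e \<inter> S) = 1" by auto }
  thus ?thesis unfolding delta0_def by auto
qed

lemma delta0_whole: "complex2 V E T \<Longrightarrow> delta0 E V = {}"
  unfolding delta0_def using complex2_edgeD by (fastforce simp: Int_absorb2)

lemma card_delta0_singleton:
  assumes "regular2 V E T k0 k1" "a \<in> V"
  shows "card (delta0 E {a}) = k0"
proof -
  have "delta0 E {a} = {e\<in>E. a \<in> e}" unfolding delta0_def
    by (auto simp: card_Suc_eq Int_insert_right split: if_splits)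
  thus ?thesis using assms unfolding regular2_def by auto
qed

lemma card_delta0_doubleton:
  assumes c: "complex2 V E T" and r: "regular2 V E T k0 k1"
    and ab: "a \<in> V" "b \<in> V" "a \<noteq> b" and k: "2 \<le> k0"
  shows "k0 \<le> card (delta0 E {a,b})"
proof -
  have fE: "finite E" by (rule complex2_finite(2)[OF c])
  define A where "A = {e\<in>E. a \<in> e} - {{a,b}}"
  define B where "B = {e\<in>E. b \<in> e} - {{a,b}}"
  have "A \<union> B \<subseteq> delta0 E {a,b}"
  proof
    fix e assume e: "e \<in> A \<union> B"
    hence eE: "e \<in> E" and ne: "e \<noteq> {a,b}" unfolding A_def B_def by auto
    obtain x y where "e = {x,y}" "x \<noteq> y" using complex2_edge_obtain[OF c eE] by blast
    hence "e \<inter> {a,b} = {a} \<or> e \<inter> {a,b} = {b}" using e ne ab(3) unfolding A_def B_def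
      by (auto simp: doubleton_eq_iff)
    thus "e \<in> delta0 E {a,b}" using eE unfolding delta0_def by auto
  qed
  hence "card (A \<union> B) \<le> card (delta0 E {a,b})"
    by (rule card_mono[rotated]) (use fE in \<open>simp add: delta0_def\<close>)
  moreover have "card (A \<union> B) = card A + card B"
  proof (rule card_Un_disjoint)
    show "finite A" "finite B" unfolding A_def B_def using fE by auto
    show "A \<inter> B = {}"
    proof (rule ccontr)
      assume "A \<inter> B \<noteq> {}"
      then obtain e where e: "e \<in> E" "a \<in> e" "b \<in> e" "e \<noteq> {a,b}" unfolding A_def B_def by auto
      obtain x y where "e = {x,y}" using complex2_edge_obtain[OF c e(1)] by blast
      thus False using e ab(3) by auto
    qed
  qed
  moreover have "k0 \<le> card A + 1" "k0 \<le> card B + 1"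
  proof -
    have "card {e\<in>E. v \<in> e} \<le> card ({e\<in>E. v \<in> e} - {{a,b}}) + 1" for v
    proof (cases "{a,b} \<in> {e\<in>E. v \<in> e}")
      case True thus ?thesis using fE card_Suc_Diff1[OF _ True] by simp
    qed simp
    thus "k0 \<le> card A + 1" "k0 \<le> card B + 1"
      using r ab unfolding regular2_def A_def B_def by auto
  qed
  ultimately show ?thesis using k by linarith
qed

lemma card_delta0_small_ge:
  assumes c: "complex2 V E T" and r: "regular2 V E T k0 k1" and S: "S \<subseteq> V"
    and s: "1 \<le> card S" "card S \<le> 2" and k: "2 \<le> k0"
  shows "k0 \<le> card (delta0 E S)"
proof (cases "card S = 1")
  case True
  then obtain a where "S = {a}" by (auto simp: card_1_singleton_iff)
  thus ?thesis using card_delta0_singleton[OF r] S by auto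
next
  case False
  hence "card S = 2" using s by simp
  then obtain a b where "S = {a,b}" "a \<noteq> b" by (auto simp: card_2_iff)
  thus ?thesis using card_delta0_doubleton[OF c r _ _ _ k] S by auto
qed

lemma vertex_enum_props: "finite V \<Longrightarrow> set (vertex_enum V) = V \<and> distinct (vertex_enum V)"
  unfolding vertex_enum_def by (rule someI_ex) (rule finite_distinct_list)

lemma second_eigenvalue_adj_matrix_ge:
  assumes c: "complex2 V E T" and r: "regular2 V E T k0 k1"
    and X: "(\<Sum>v\<in>V. X v) = 0" "(\<Sum>v\<in>V. (X v)\<^sup>2) > 0" and tk: "t \<le> k0"
    and ray: "t * (\<Sum>v\<in>V. (X v)\<^sup>2) \<le> (\<Sum>v\<in>V. \<Sum>w\<in>V. adj E v w * X v * X w)"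
  shows "t \<le> second_eigenvalue (adj_matrix V E)"
proof -
  define xs where "xs = vertex_enum V"
  define n where "n = length xs"
  have xs: "set xs = V" "distinct xs"
    using vertex_enum_props complex2_finite(1)[OF c] unfolding xs_def by auto
  have "bij_betw ((!) xs) {..<n} V" using bij_betw_nth[OF xs(2)] xs(1) n_def by auto
  hence reindex: "(\<Sum>i<n. g (xs!i)) = (\<Sum>v\<in>V. g v)" for g :: "'a \<Rightarrow> real"
    using sum.reindex_bij_betw by blast
  define a where "a i j = adj E (xs!i) (xs!j)" for i j
  define x where "x i = X (xs!i)" for i
  have "\<forall>i<n. matvec n a (\<lambda>_. 1) i = real k0 * 1"
  proof (intro allI impI)
    fix i assume "i < n"
    hence "xs ! i \<in> V" using xs(1) n_def by auto
    thus "matvec n a (\<lambda>_. 1) i = real k0 * 1"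
      unfolding matvec_def a_def using reindex regular2_sum_adj[OF c r] by simp
  qed
  moreover have "dotp n (\<lambda>_. 1) (\<lambda>_. 1) > 0"
    using X(2) xs(1) unfolding dotp_def n_def by (cases xs) auto
  moreover have "dotp n x (\<lambda>_. 1) = 0" "dotp n x x = (\<Sum>v\<in>V. (X v)\<^sup>2)"
    unfolding dotp_def x_def using reindex X(1) by (simp_all add: power2_eq_square)
  moreover have "qform n a x = (\<Sum>v\<in>V. \<Sum>w\<in>V. adj E v w * X v * X w)"
  proof -
    have "matvec n a x i = (\<Sum>w\<in>V. adj E (xs!i) w * X w)" for i
      unfolding matvec_def a_def x_def using reindex[of "\<lambda>w. adj E (xs!i) w * X w"] by simp
    hence "qform n a x = (\<Sum>v\<in>V. X v * (\<Sum>w\<in>V. adj E v w * X w))"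
      unfolding qform_def dotp_def x_def using reindex[of "\<lambda>v. X v * (\<Sum>w\<in>V. adj E v w * X w)"]
      by simp
    thus ?thesis by (simp add: sum_distrib_left algebra_simps)
  qed
  moreover have "a i j = a j i" for i j unfolding a_def by (rule adj_commute)
  ultimately have "t \<le> second_eigenvalue (mat n n (\<lambda>(i,j). a i j))"
    using second_eigenvalue_ge[of a n "\<lambda>_. 1" k0 t x] tk X(2) ray by auto
  moreover have "adj_matrix V E = mat n n (\<lambda>(i,j). a i j)"
    unfolding adj_matrix_def Let_def xs_def[symmetric] n_def a_def adj_def by simp
  ultimately show ?thesis by simp
qed

lemma centred_indicator_sums:
  assumes fV: "finite V" and S: "S \<subseteq> V" and ne: "V \<noteq> {}"
    and X: "\<And>v. X v = (if v \<in> S then 1 else 0) - real (card S) / real (card V)"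
  shows "(\<Sum>v\<in>V. X v) = 0"
    and "(\<Sum>v\<in>V. (X v)\<^sup>2) = real (card S) * (real (card V) - real (card S)) / real (card V)"
proof -
  define s where "s = real (card S)"
  define m where "m = real (card V)"
  have m: "m > 0" using fV ne unfolding m_def by (simp add: card_gt_0_iff)
  have VS: "real (card (V - S)) = m - s"
    using S fV unfolding m_def s_def by (simp add: card_Diff_subset finite_subset card_mono)
  have split: "(\<Sum>v\<in>V. f v) = (\<Sum>v\<in>S. f v) + (\<Sum>v\<in>V - S. f v)" for f :: "'a \<Rightarrow> real"
    using sum.subset_diff[OF S fV] by (simp add: add.commute)
  have "(\<Sum>v\<in>V. X v) = s * (1 - s / m) + (m - s) * (- (s / m))"
    unfolding split X s_def m_def using S VS[unfolded m_def s_def] by (simp add: subset_eq)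
  thus "(\<Sum>v\<in>V. X v) = 0" using m by (simp add: field_simps)
  have "(\<Sum>v\<in>V. (X v)\<^sup>2) = s * (1 - s / m)\<^sup>2 + (m - s) * (s / m)\<^sup>2"
    unfolding split X s_def m_def using S VS[unfolded m_def s_def] by (simp add: subset_eq)
  also have "\<dots> = s * (m - s) / m" using m by (simp add: field_simps power2_eq_square)
  finally show "(\<Sum>v\<in>V. (X v)\<^sup>2) = real (card S) * (real (card V) - real (card S)) / real (card V)"
    by (simp only: s_def m_def)
qed

text \<open>The centred indicator of \<open>S\<close> is orthogonal to the constant eigenvector, its squared norm
  \<open>|S|(|V| - |S|)/|V|\<close> is at least 2, and its Rayleigh quotient is \<open>k\<^sub>0 - |\<delta>S|/\<Sum>X\<^sup>2\<close>.\<close>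
lemma small_cut_imp_second_eigenvalue_ge:
  assumes c: "complex2 V E T" and r: "regular2 V E T k0 k1" and S: "S \<subseteq> V"
    and s: "3 \<le> card S" "card S + 3 \<le> card V" and n9: "9 \<le> card V"
    and small: "card (delta0 E S) < k0"
  shows "real k0 / 2 \<le> second_eigenvalue (adj_matrix V E)"
proof -
  have fV: "finite V" by (rule complex2_finite(1)[OF c])
  have ne: "V \<noteq> {}" using n9 by auto
  define X where "X v = (if v \<in> S then 1 else 0) - real (card S) / real (card V)" for v
  note sums = centred_indicator_sums[OF fV S ne X_def]
  have "2 * real (card V) \<le> real (card S) * (real (card V) - real (card S))"
  proof -
    have "(real (card S) - 3) * (real (card V) - 3 - real (card S)) \<ge> 0" using s by simp
    moreover have "3 * (real (card V) - 3) \<ge> 2 * real (card V)" using n9 by simp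
    ultimately show ?thesis by (simp add: algebra_simps)
  qed
  hence big: "(\<Sum>v\<in>V. (X v)\<^sup>2) \<ge> 2" unfolding sums(2) using n9 by (simp add: le_divide_eq)
  have form: "(\<Sum>v\<in>V. \<Sum>w\<in>V. adj E v w * X v * X w) = k0 * (\<Sum>v\<in>V. (X v)\<^sup>2) - card (delta0 E S)"
    unfolding regular2_adj_form[OF c r] using sum_adj_indicator_diff[OF c S] by (simp add: X_def)
  have "real k0 / 2 * 2 \<le> real k0 / 2 * (\<Sum>v\<in>V. (X v)\<^sup>2)"
    using big by (intro mult_left_mono) auto
  moreover have "real (card (delta0 E S)) < real k0" using small by simp
  ultimately have "real (card (delta0 E S)) \<le> real k0 / 2 * (\<Sum>v\<in>V. (X v)\<^sup>2)" by linarith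
  thus ?thesis
    using big form by (intro second_eigenvalue_adj_matrix_ge[OF c r sums(1)]) auto
qed

lemma card_coboundary_ge_degree:
  assumes c: "complex2 V E T" and r: "regular2 V E T k0 k1" and n9: "9 \<le> card V"
    and gap: "k0 > 0 \<Longrightarrow> second_eigenvalue (adj_matrix V E) < real k0 / 2"
    and S: "S \<subseteq> V" and ne: "delta0 E S \<noteq> {}"
  shows "k0 \<le> card (delta0 E S)"
proof (cases "k0 \<le> 1")
  case True
  have "finite (delta0 E S)" using complex2_finite(2)[OF c] unfolding delta0_def by auto
  hence "1 \<le> card (delta0 E S)" using ne by (simp add: Suc_le_eq card_gt_0_iff)
  thus ?thesis using True by simp
next
  case False
  hence k2: "2 \<le> k0" by simp
  have fV: "finite V" by (rule complex2_finite(1)[OF c])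
  have "S \<noteq> {}" "S \<noteq> V" using ne delta0_whole[OF c] unfolding delta0_def by auto
  hence s: "1 \<le> card S" "card S < card V" using S fV
    by (auto simp: Suc_le_eq card_gt_0_iff finite_subset psubset_card_mono)
  have cVS: "card (V - S) = card V - card S" using S fV by (simp add: card_Diff_subset finite_subset)
  consider "card S \<le> 2" | "card V \<le> card S + 2" | "3 \<le> card S" "card S + 3 \<le> card V" by linarith
  thus ?thesis
  proof cases
    case 1 thus ?thesis using card_delta0_small_ge[OF c r S s(1) _ k2] by simp
  next
    case 2
    have "k0 \<le> card (delta0 E (V - S))"
      by (rule card_delta0_small_ge[OF c r _ _ _ k2]) (use 2 s cVS in auto)
    thus ?thesis using delta0_Diff[OF c S] by simp
  next
    case 3
    show ?thesis
    proof (rule ccontr)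
      assume "\<not> k0 \<le> card (delta0 E S)"
      hence "real k0 / 2 \<le> second_eigenvalue (adj_matrix V E)"
        using small_cut_imp_second_eigenvalue_ge[OF c r S 3 n9] by simp
      thus False using gap k2 by simp
    qed
  qed
qed

lemma card_le_sdist_plus_card: "finite B \<Longrightarrow> finite A \<Longrightarrow> card B \<le> sdist A B + card A"
proof -
  assume f: "finite B" "finite A"
  have "card B \<le> card ((B - A) \<union> A)" by (rule card_mono) (use f in auto)
  also have "\<dots> \<le> card (B - A) + card A" by (rule card_Un_le)
  finally show ?thesis unfolding sdist_def by simp
qed

lemma sdist_fam_ge_min:
  assumes Z: "finite Z" "{} \<in> Z" and big: "\<And>B. B \<in> Z \<Longrightarrow> B \<noteq> {} \<Longrightarrow> finite B \<and> k \<le> card B"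
    and A: "finite A"
  shows "min (card A) (k - card A) \<le> sdist_fam A Z"
proof -
  have "min (card A) (k - card A) \<le> sdist A B" if "B \<in> Z" for B
  proof (cases "B = {}")
    case False
    thus ?thesis using big[OF that False] card_le_sdist_plus_card[OF _ A, of B] by linarith
  qed (simp add: sdist_def)
  thus ?thesis unfolding sdist_fam_def using Z by (subst Min_ge_iff) auto
qed

lemma finite_Z1: "finite E \<Longrightarrow> finite (Z1 E T)"
  unfolding Z1_def by (rule rev_finite_subset[of "Pow E"]) auto

lemma cosystolic_card_delta1_ge:
  assumes cx: "cosystolic_expander V E T k0 k1 eps mu" and fE: "finite E" and S: "S \<subseteq> E"
  shows "eps * real k1 * real (sdist_fam S (Z1 E T)) \<le> real (card (delta1 T S))"
proof (cases "delta1 T S = {}")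
  case True
  hence "S \<in> Z1 E T" using S unfolding Z1_def by simp
  hence "sdist_fam S (Z1 E T) \<le> sdist S S"
    unfolding sdist_fam_def using finite_Z1[OF fE] by (intro Min_le) auto
  thus ?thesis by (simp add: sdist_def)
next
  case False
  hence "eps * real k1 \<le> real (card (delta1 T S)) / real (sdist_fam S (Z1 E T))"
    using cx S unfolding cosystolic_expander_def by blast
  thus ?thesis by (cases "sdist_fam S (Z1 E T) = 0") (simp_all add: le_divide_eq)
qed

lemma cosystolic_cocycle_card_ge:
  assumes c: "complex2 V E T" and r: "regular2 V E T k0 k1"
    and cx: "cosystolic_expander V E T k0 k1 eps mu"
    and n: "9 + nat \<lceil>4 / mu\<rceil> \<le> card V"
    and gap: "k0 > 0 \<Longrightarrow> second_eigenvalue (adj_matrix V E) < real k0 / 2"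
    and Z: "Z \<in> Z1 E T" "Z \<noteq> {}"
  shows "k0 \<le> card Z"
proof -
  have ZE: "Z \<subseteq> E" and dZ: "delta1 T Z = {}" using Z(1) unfolding Z1_def by auto
  have mu: "mu > 0" using cx unfolding cosystolic_expander_def by simp
  from dZ ZE cx have "Z \<in> B1 V E \<or> real (card Z) \<ge> mu * real (card E)"
    unfolding cosystolic_expander_def by blast
  thus ?thesis
  proof
    assume "Z \<in> B1 V E"
    then obtain S where "S \<subseteq> V" "Z = delta0 E S" unfolding B1_def by auto
    thus ?thesis using card_coboundary_ge_degree[OF c r _ gap] n Z(2) by simp
  next
    assume Zbig: "real (card Z) \<ge> mu * real (card E)"
    have "4 / mu \<le> real (card V)" using n by linarith
    hence "4 \<le> mu * real (card V)" using mu by (simp add: divide_le_eq mult.commute)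
    hence "4 * real k0 \<le> mu * real (card V) * real k0" by (simp add: mult_right_mono)
    also have "\<dots> = 2 * (mu * real (card E))"
    proof -
      have "real (card V) * real k0 = 2 * real (card E)"
        using regular2_handshake[OF c r] by (metis of_nat_mult of_nat_numeral)
      thus ?thesis by (metis mult.assoc mult.left_commute)
    qed
    finally have "real k0 \<le> real (card Z)" using Zbig by linarith
    thus ?thesis by simp
  qed
qed

lemma local_view_card_delta1_ge:
  assumes c: "complex2 V E T" and r: "regular2 V E T k0 k1"
    and cx: "cosystolic_expander V E T k0 k1 eps mu"
    and n: "9 + nat \<lceil>4 / mu\<rceil> \<le> card V"
    and gap: "k0 > 0 \<Longrightarrow> second_eigenvalue (adj_matrix V E) < real k0 / 2"
    and F: "F \<subseteq> E"
  shows "eps * real k1 * real (min (card (local_view F v)) (k0 - card (local_view F v)))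
           \<le> real (card (delta1 T (local_view F v)))"
proof -
  have fE: "finite E" by (rule complex2_finite(2)[OF c])
  have Fv: "local_view F v \<subseteq> E" using F unfolding local_view_def by auto
  have "min (card (local_view F v)) (k0 - card (local_view F v)) \<le> sdist_fam (local_view F v) (Z1 E T)"
  proof (rule sdist_fam_ge_min[OF finite_Z1[OF fE]])
    show "{} \<in> Z1 E T" unfolding Z1_def delta1_def by simp
    show "finite B \<and> k0 \<le> card B" if "B \<in> Z1 E T" "B \<noteq> {}" for B
      using that cosystolic_cocycle_card_ge[OF c r cx n gap] fE
      unfolding Z1_def by (auto intro: finite_subset)
    show "finite (local_view F v)" using Fv fE by (rule finite_subset)
  qed
  moreover have "eps * real k1 \<ge> 0" using cx unfolding cosystolic_expander_def by simp
  ultimately have "eps * real k1 * real (min (card (local_view F v)) (k0 - card (local_view F v)))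
      \<le> eps * real k1 * real (sdist_fam (local_view F v) (Z1 E T))"
    by (intro mult_left_mono) simp_all
  also have "\<dots> \<le> real (card (delta1 T (local_view F v)))"
    by (rule cosystolic_card_delta1_ge[OF cx fE Fv])
  finally show ?thesis .
qed

lemma local_view_coboundary_bounds:
  assumes c: "complex2 V E T" and r: "regular2 V E T k0 k1"
    and cx: "cosystolic_expander V E T k0 k1 eps mu"
    and eta: "1/2 < eta" "eta < 1" and F: "F \<subseteq> E"
    and lam: "lambda2_norm V E k0 < 1/2" and n: "9 + nat \<lceil>4 / mu\<rceil> \<le> card V"
  shows "(\<forall>v\<in>V. real k0 / 2 < real (card (local_view F v)) \<and>
               real (card (local_view F v)) \<le> eta * real k0 \<longrightarrow>
               real (card (delta1 T (local_view F v))) \<ge> eps * real k1 * (1 - eta) * real k0) \<and>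
      (\<forall>v\<in>V. real (card (local_view F v)) \<le> real k0 / 2 \<longrightarrow>
               real (card (delta1 T (local_view F v))) \<ge> eps * real k1 * real (card (local_view F v)))"
proof (intro conjI ballI impI)
  have "second_eigenvalue (adj_matrix V E) < real k0 / 2" if "k0 > 0"
    using lam that unfolding lambda2_norm_def by (simp add: divide_less_eq)
  note bound = local_view_card_delta1_ge[OF c r cx n this F]
  have ek: "eps * real k1 \<ge> 0" using cx unfolding cosystolic_expander_def by simp
  fix v
  let ?f = "card (local_view F v)"
  { assume fat: "real k0 / 2 < real ?f \<and> real ?f \<le> eta * real k0"
    hence "0 < k0" by (cases k0) auto
    hence "eta * real k0 < real k0" using eta by simp
    hence "?f < k0" using fat by linarith
    moreover have "k0 < 2 * ?f" using fat by linarith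
    ultimately have "real (min ?f (k0 - ?f)) = real k0 - real ?f" by (simp add: of_nat_diff)
    hence "real (min ?f (k0 - ?f)) \<ge> (1 - eta) * real k0"
      using fat by (simp add: algebra_simps)
    hence "eps * real k1 * real (min ?f (k0 - ?f)) \<ge> eps * real k1 * ((1 - eta) * real k0)"
      using ek by (rule mult_left_mono)
    thus "real (card (delta1 T (local_view F v))) \<ge> eps * real k1 * (1 - eta) * real k0"
      using bound[of v] by (simp add: mult.assoc) }
  { assume "real ?f \<le> real k0 / 2"
    hence "min ?f (k0 - ?f) = ?f" by simp
    thus "real (card (delta1 T (local_view F v))) \<ge> eps * real k1 * real ?f"
      using bound[of v] by simp }
qed

theorem lemma3p8:
  shows "\<forall>(mu::real) (lam::real). \<exists>N::nat.
    \<forall>(V::'a set) E T k0 k1 (eps::real) (eta::real) F.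
      complex2 V E T \<and> regular2 V E T k0 k1 \<and> cosystolic_expander V E T k0 k1 eps mu \<and>
      1/2 < eta \<and> eta < 1 \<and> F \<subseteq> E \<and>
      lambda2_norm V E k0 = lam \<and> lam < 1/2 \<and> card V \<ge> N \<longrightarrow>
      (\<forall>v\<in>V. real k0 / 2 < real (card (local_view F v)) \<and>
               real (card (local_view F v)) \<le> eta * real k0 \<longrightarrow>
               real (card (delta1 T (local_view F v))) \<ge> eps * real k1 * (1 - eta) * real k0) \<and>
      (\<forall>v\<in>V. real (card (local_view F v)) \<le> real k0 / 2 \<longrightarrow>
               real (card (delta1 T (local_view F v))) \<ge> eps * real k1 * real (card (local_view F v)))"
  by (intro allI, rule_tac x = "9 + nat \<lceil>4 / mu\<rceil>" in exI, intro allI impI, elim conjE)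
    (rule local_view_coboundary_bounds, assumption+, linarith, assumption)

end
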